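(* Let $u,v$ be positive integers with $uv\equiv 4,8\pmod{12}$ and $v$ even. Then $\Phi(u\times v,4,2)\le\left\lfloor\frac{u}{4}\left(\left\lfloor\frac{uv-1}{3}\left\lfloor\frac{uv-2}{2}\right\rfloor\right\rfloor-1\right)\right\rfloor$.
   Context: A 2-D $(u\times v,4,2)$-OOC is a family $\mathcal C$ of $u\times v$ $(0,1)$-matrices of Hamming weight $4$ such that for all $A=(a_{ij}),B=(b_{ij})\in\mathcal C$ and integers $r$ with $A\ne B$ or $r\not\equiv0\pmod v$, $\sum_{i,j}a_{ij}b_{i,j+r}\le 2$ (column indices mod $v$). $\Phi(u\times v,4,2)$ is the largest size of such a code. *)

theory Defs
  imports Main "HOL-Library.Library"
begin

text \<open>A u x v (0,1)-matrix is represented by its support: the set of positions (i,j)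
  with entry 1, where i < u (row) and j < v (column).\<close>

definition matrices :: "nat \<Rightarrow> nat \<Rightarrow> (nat \<times> nat) set set" where
  "matrices u v = Pow ({0..<u} \<times> {0..<v})"

definition corr :: "nat \<Rightarrow> (nat \<times> nat) set \<Rightarrow> (nat \<times> nat) set \<Rightarrow> int \<Rightarrow> nat" where
  "corr v A B r = card {(i,j) \<in> A. (i, nat ((int j + r) mod int v)) \<in> B}"

definition is_OOC_4_2 :: "nat \<Rightarrow> nat \<Rightarrow> (nat \<times> nat) set set \<Rightarrow> bool" where
  "is_OOC_4_2 u v C \<longleftrightarrow>
     C \<subseteq> matrices u v \<and> (\<forall>A\<in>C. card A = 4) \<and>
     (\<forall>A\<in>C. \<forall>B\<in>C. \<forall>r::int. (A \<noteq> B \<or> \<not> (int v dvd r)) \<longrightarrow> corr v A B r \<le> 2)"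

definition Phi_4_2 :: "nat \<Rightarrow> nat \<Rightarrow> nat" where
  "Phi_4_2 u v = Max {card C | C. is_OOC_4_2 u v C}"

end

theory Submission
  imports Defs
begin

text \<open>Together with all its cyclic shifts, an OOC gives a family of \<open>4 |C| v\<close> blocks of
  size 4 in the grid of \<open>n = uv\<close> points, any two of which meet in at most two points.
  Hence two distinct points lie in at most \<open>k = (n - 2)/2\<close> common blocks, and counting
  the pairs through a fixed point bounds its degree by \<open>(n - 1) k / 3\<close>. Since \<open>v\<close> is even,
  shifting by \<open>v/2\<close> pairs up the blocks through a point and its antipode, so that pair
  lies in an even number of blocks; as \<open>k\<close> is odd this costs one unit, which improves the
  degree bound to \<open>J - 1\<close> with \<open>J = (n - 1) k / 3\<close> (an integer when \<open>n \<equiv> 4, 8 (mod 12)\<close>).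
  Double counting incidences then gives \<open>4 |C| \<le> u (J - 1)\<close>.\<close>

definition degree :: "'i set \<Rightarrow> ('i \<Rightarrow> 'a set) \<Rightarrow> 'a \<Rightarrow> nat" where
  "degree I B x = card {i \<in> I. x \<in> B i}"

definition pair_degree :: "'i set \<Rightarrow> ('i \<Rightarrow> 'a set) \<Rightarrow> 'a \<Rightarrow> 'a \<Rightarrow> nat" where
  "pair_degree I B x y = card {i \<in> I. x \<in> B i \<and> y \<in> B i}"

locale uniform_family =
  fixes X :: "'a set" and I :: "'i set" and B :: "'i \<Rightarrow> 'a set" and m :: nat
  assumes finite_points: "finite X" and finite_index: "finite I"
    and block_subset: "i \<in> I \<Longrightarrow> B i \<subseteq> X"
    and card_block: "i \<in> I \<Longrightarrow> card (B i) = m"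
begin

lemma finite_block: "i \<in> I \<Longrightarrow> finite (B i)"
  using block_subset finite_points finite_subset by blast

lemma sum_degree: "(\<Sum>x\<in>X. degree I B x) = m * card I"
proof -
  have "(\<Sum>x\<in>X. degree I B x) = (\<Sum>x\<in>X. \<Sum>i\<in>{i. i \<in> I \<and> x \<in> B i}. 1::nat)"
    by (simp add: degree_def)
  also have "\<dots> = (\<Sum>i\<in>I. \<Sum>x\<in>{x. x \<in> X \<and> x \<in> B i}. 1::nat)"
    by (rule sum.swap_restrict[OF finite_points finite_index])
  also have "\<dots> = (\<Sum>i\<in>I. m)"
  proof (rule sum.cong)
    fix i assume "i \<in> I"
    then have "{x. x \<in> X \<and> x \<in> B i} = B i" using block_subset by blast
    then show "(\<Sum>x\<in>{x. x \<in> X \<and> x \<in> B i}. 1::nat) = m" using card_block \<open>i \<in> I\<close> by simp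
  qed simp
  finally show ?thesis by simp
qed

lemma degree_through_point:
  assumes "x \<in> X"
  shows "(m - 1) * degree I B x = (\<Sum>y\<in>X - {x}. pair_degree I B x y)"
proof -
  define Ix where "Ix = {i \<in> I. x \<in> B i}"
  have "(m - 1) * degree I B x = (\<Sum>i\<in>Ix. card (B i - {x}))"
    by (simp add: degree_def Ix_def card_block finite_block)
  also have "\<dots> = (\<Sum>i\<in>Ix. \<Sum>y\<in>{y. y \<in> X - {x} \<and> y \<in> B i}. 1::nat)"
  proof (rule sum.cong)
    fix i assume "i \<in> Ix"
    then have "{y. y \<in> X - {x} \<and> y \<in> B i} = B i - {x}" using block_subset Ix_def by blast
    then show "card (B i - {x}) = (\<Sum>y\<in>{y. y \<in> X - {x} \<and> y \<in> B i}. 1::nat)" by simp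
  qed simp
  also have "\<dots> = (\<Sum>y\<in>X - {x}. \<Sum>i\<in>{i. i \<in> Ix \<and> y \<in> B i}. 1::nat)"
    by (rule sum.swap_restrict) (simp_all add: Ix_def finite_index finite_points)
  also have "\<dots> = (\<Sum>y\<in>X - {x}. pair_degree I B x y)"
    by (simp add: pair_degree_def Ix_def conj_assoc)
  finally show ?thesis .
qed

end

locale triple_packing = uniform_family +
  assumes card_Int_block_le: "i \<in> I \<Longrightarrow> j \<in> I \<Longrightarrow> i \<noteq> j \<Longrightarrow> card (B i \<inter> B j) \<le> 2"
begin

lemma pair_degree_le:
  assumes "x \<in> X" "y \<in> X" "x \<noteq> y"
  shows "(m - 2) * pair_degree I B x y \<le> card X - 2"
proof -
  define Ixy where "Ixy = {i \<in> I. x \<in> B i \<and> y \<in> B i}"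
  have disjoint: "(B i - {x, y}) \<inter> (B j - {x, y}) = {}"
    if "i \<in> Ixy" "j \<in> Ixy" "i \<noteq> j" for i j
  proof (rule ccontr)
    assume "\<not> ?thesis"
    then obtain z where "z \<in> B i \<inter> B j" "z \<notin> {x, y}" by blast
    then have "{x, y, z} \<subseteq> B i \<inter> B j" "card {x, y, z} = 3"
      using that \<open>x \<noteq> y\<close> by (auto simp: Ixy_def)
    moreover have "card (B i \<inter> B j) \<le> 2"
      using that card_Int_block_le by (simp add: Ixy_def)
    ultimately show False
      using card_mono[of "B i \<inter> B j" "{x, y, z}"] finite_block that
      by (force simp: Ixy_def)
  qed
  have "(m - 2) * pair_degree I B x y = (\<Sum>i\<in>Ixy. card (B i - {x, y}))"
    using assms by (simp add: pair_degree_def Ixy_def card_block finite_block card_Diff_subset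
        numeral_2_eq_2)
  also have "\<dots> = card (\<Union>i\<in>Ixy. B i - {x, y})"
    by (rule card_UN_disjoint[symmetric])
      (use disjoint finite_block in \<open>auto simp: Ixy_def finite_index\<close>)
  also have "\<dots> \<le> card (X - {x, y})"
    by (rule card_mono) (use block_subset finite_points in \<open>auto simp: Ixy_def\<close>)
  also have "\<dots> = card X - 2"
    using assms finite_points by (simp add: card_Diff_subset)
  finally show ?thesis .
qed

end

definition cyclic_shift :: "nat \<Rightarrow> nat \<Rightarrow> (nat \<times> nat) set \<Rightarrow> (nat \<times> nat) set" where
  "cyclic_shift v r A = (\<lambda>(i, j). (i, (j + r) mod v)) ` A"

lemma nat_mod_shift_difference:
  fixes j k r s v :: nat
  assumes "(j + r) mod v = (k + s) mod v" "k < v"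
  shows "nat ((int j + (int r - int s)) mod int v) = k"
  by (smt (verit, del_insts) add_diff_cancel assms mod_diff_left_eq mod_less nat_int of_nat_add
      zmod_int)

lemma mod_add_right_inj:
  fixes j j' r v :: nat
  assumes "j < v" "j' < v" "(j + r) mod v = (j' + r) mod v"
  shows "j = j'"
  using nat_mod_shift_difference[OF assms(3,2)] assms(1) by simp

lemma cyclic_shift_subset:
  assumes "A \<subseteq> {0..<u} \<times> {0..<v}" "v > 0"
  shows "cyclic_shift v r A \<subseteq> {0..<u} \<times> {0..<v}"
  using assms unfolding cyclic_shift_def by auto

lemma card_cyclic_shift:
  assumes "A \<subseteq> UNIV \<times> {0..<v}"
  shows "card (cyclic_shift v r A) = card A"
  unfolding cyclic_shift_def
proof (rule card_image, rule inj_onI)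
  fix x y assume "x \<in> A" "y \<in> A"
    and eq: "(\<lambda>(i, j). (i, (j + r) mod v)) x = (\<lambda>(i, j). (i, (j + r) mod v)) y"
  obtain i j i' j' where xy: "x = (i, j)" "y = (i', j')" by fastforce
  have "j < v" "j' < v" using \<open>x \<in> A\<close> \<open>y \<in> A\<close> assms xy by auto
  moreover have "(j + r) mod v = (j' + r) mod v" using eq xy by simp
  ultimately have "j = j'" by (rule mod_add_right_inj)
  then show "x = y" using eq xy by simp
qed

lemma cyclic_shift_cyclic_shift:
  "cyclic_shift v s (cyclic_shift v r A) = cyclic_shift v ((r + s) mod v) A"
  unfolding cyclic_shift_def image_image by (simp add: case_prod_unfold mod_simps add.assoc)

lemma card_Int_cyclic_shift_le_corr:
  assumes "finite A" "B \<subseteq> UNIV \<times> {0..<v}"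
  shows "card (cyclic_shift v r A \<inter> cyclic_shift v s B) \<le> corr v A B (int r - int s)"
proof -
  define S where "S = {(i, j) \<in> A. (i, nat ((int j + (int r - int s)) mod int v)) \<in> B}"
  have finite_S: "finite S" using assms(1) unfolding S_def by (simp add: case_prod_unfold)
  have "cyclic_shift v r A \<inter> cyclic_shift v s B \<subseteq> (\<lambda>(i, j). (i, (j + r) mod v)) ` S"
  proof
    fix z assume "z \<in> cyclic_shift v r A \<inter> cyclic_shift v s B"
    then obtain i j k where ij: "(i, j) \<in> A" and ik: "(i, k) \<in> B"
      and z: "z = (i, (j + r) mod v)" and jk: "(j + r) mod v = (k + s) mod v"
      unfolding cyclic_shift_def by auto
    have "nat ((int j + (int r - int s)) mod int v) = k"
      using ik assms(2) nat_mod_shift_difference[OF jk] by auto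
    then have "(i, j) \<in> S" using ij ik unfolding S_def by simp
    then show "z \<in> (\<lambda>(i, j). (i, (j + r) mod v)) ` S" using z by force
  qed
  then have "card (cyclic_shift v r A \<inter> cyclic_shift v s B)
      \<le> card ((\<lambda>(i, j). (i, (j + r) mod v)) ` S)"
    using finite_S by (intro card_mono) auto
  also have "\<dots> \<le> card S" using finite_S by (rule card_image_le)
  also have "card S = corr v A B (int r - int s)" unfolding S_def corr_def ..
  finally show ?thesis .
qed

lemma even_card_involution:
  assumes "finite S" and "\<And>x. x \<in> S \<Longrightarrow> f x \<in> S"
    and "\<And>x. x \<in> S \<Longrightarrow> f (f x) = x" and "\<And>x. x \<in> S \<Longrightarrow> f x \<noteq> x"
  shows "even (card S)"
proof -
  define P where "P = (\<lambda>x. {x, f x}) ` S"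
  have orbit: "{z, f z} = {x, f x}" if "x \<in> S" "z \<in> {x, f x}" for x z
    using that assms(3) by (auto simp: insert_commute)
  have "2 * card P = card (\<Union>P)"
  proof (rule card_partition)
    fix c assume "c \<in> P"
    then obtain x where "x \<in> S" "c = {x, f x}" by (auto simp: P_def)
    then show "card c = 2" using assms(4) by (metis card_2_iff)
  next
    fix c1 c2 assume "c1 \<in> P" "c2 \<in> P" "c1 \<noteq> c2"
    then obtain x y where "x \<in> S" "y \<in> S" "c1 = {x, f x}" "c2 = {y, f y}" by (auto simp: P_def)
    then show "c1 \<inter> c2 = {}" using \<open>c1 \<noteq> c2\<close> orbit by blast
  qed (use assms(1) in \<open>auto simp: P_def\<close>)
  moreover have "\<Union>P = S" using assms(2) by (auto simp: P_def)
  ultimately show ?thesis by (metis dvd_triv_left)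
qed

lemma dvd_diff_imp_eq:
  fixes r s v :: nat
  assumes "r < v" "s < v" "int v dvd (int r - int s)"
  shows "r = s"
proof -
  have "int r mod int v = int s mod int v" using assms(3) by (simp add: mod_eq_dvd_iff)
  then show ?thesis using assms(1,2) by (simp flip: of_nat_mod)
qed

lemma OOC_cyclic_shifts_triple_packing:
  assumes "is_OOC_4_2 u v C" "v > 0"
  shows "triple_packing ({0..<u} \<times> {0..<v}) (C \<times> {0..<v}) (\<lambda>(A, r). cyclic_shift v r A) 4"
proof -
  have C: "C \<subseteq> Pow ({0..<u} \<times> {0..<v})" "\<And>A. A \<in> C \<Longrightarrow> card A = 4"
    and corr: "\<And>A B r. A \<in> C \<Longrightarrow> B \<in> C \<Longrightarrow> A \<noteq> B \<or> \<not> int v dvd r \<Longrightarrow> corr v A B r \<le> 2"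
    using assms(1) unfolding is_OOC_4_2_def matrices_def by blast+
  show ?thesis
  proof unfold_locales
    show "finite ({0..<u} \<times> {0..<v})" by simp
    show "finite (C \<times> {0..<v})" using C(1) by (simp add: finite_subset)
  next
    fix i assume "i \<in> C \<times> {0..<v}"
    then obtain A r where i: "i = (A, r)" "A \<in> C" by blast
    then have grid: "A \<subseteq> {0..<u} \<times> {0..<v}" using C(1) by blast
    show "(case i of (A, r) \<Rightarrow> cyclic_shift v r A) \<subseteq> {0..<u} \<times> {0..<v}"
      using cyclic_shift_subset[OF grid assms(2)] i by simp
    have "card (cyclic_shift v r A) = card A" by (rule card_cyclic_shift) (use grid in blast)
    then show "card (case i of (A, r) \<Rightarrow> cyclic_shift v r A) = 4" using i C(2) by simp
  next
    fix i j assume "i \<in> C \<times> {0..<v}" "j \<in> C \<times> {0..<v}" "i \<noteq> j"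
    then obtain A r B s where ij: "i = (A, r)" "j = (B, s)" "A \<in> C" "B \<in> C" "r < v" "s < v"
      by (metis SigmaE atLeastLessThan_iff)
    have "A \<noteq> B \<or> \<not> int v dvd (int r - int s)"
      using dvd_diff_imp_eq[OF ij(5,6)] \<open>i \<noteq> j\<close> ij(1,2) by auto
    then have "corr v A B (int r - int s) \<le> 2" by (rule corr[OF ij(3,4)])
    moreover have "finite A" "B \<subseteq> UNIV \<times> {0..<v}"
      using C(1) ij(3,4) by (auto intro: finite_subset[of _ "{0..<u} \<times> {0..<v}"])
    then have "card (cyclic_shift v r A \<inter> cyclic_shift v s B) \<le> corr v A B (int r - int s)"
      by (rule card_Int_cyclic_shift_le_corr)
    ultimately show "card ((case i of (A, r) \<Rightarrow> cyclic_shift v r A)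
        \<inter> (case j of (A, r) \<Rightarrow> cyclic_shift v r A)) \<le> 2"
      using ij by simp
  qed
qed

lemma antipodal_shift_twice:
  fixes c h v :: nat
  assumes "v = 2 * h" "c < v"
  shows "((c + h) mod v + h) mod v = c"
  using assms by (simp add: mod_simps add.assoc flip: mult_2)

lemma mem_cyclic_shiftI: "(i, j) \<in> A \<Longrightarrow> (i, (j + r) mod v) \<in> cyclic_shift v r A"
  unfolding cyclic_shift_def by (rule image_eqI[where x = "(i, j)"]) simp_all

lemma even_pair_degree_antipodal:
  assumes "finite C" "v = 2 * h" "b < v"
  shows "even (pair_degree (C \<times> {0..<v}) (\<lambda>(A, r). cyclic_shift v r A) (a, b) (a, (b + h) mod v))"
proof -
  define S where "S = {i \<in> C \<times> {0..<v}. (a, b) \<in> (case i of (A, r) \<Rightarrow> cyclic_shift v r A)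
    \<and> (a, (b + h) mod v) \<in> (case i of (A, r) \<Rightarrow> cyclic_shift v r A)}"
  define \<sigma> where "\<sigma> = (\<lambda>(A :: (nat \<times> nat) set, r). (A, (r + h) mod v))"
  have "even (card S)"
  proof (rule even_card_involution)
    show "finite S" by (rule finite_subset[of _ "C \<times> {0..<v}"]) (auto simp: S_def assms(1))
  next
    fix p assume "p \<in> S"
    then obtain A r where p: "p = (A, r)" "A \<in> C" "r < v" "(a, b) \<in> cyclic_shift v r A"
      "(a, (b + h) mod v) \<in> cyclic_shift v r A" by (auto simp: S_def)
    have "(a, (b + h) mod v) \<in> cyclic_shift v ((r + h) mod v) A"
      using mem_cyclic_shiftI[where r = h and v = v, OF p(4)]
      by (simp only: cyclic_shift_cyclic_shift)
    moreover have "(a, b) \<in> cyclic_shift v ((r + h) mod v) A"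
      using mem_cyclic_shiftI[where r = h and v = v, OF p(5)] assms
      by (simp add: cyclic_shift_cyclic_shift antipodal_shift_twice)
    ultimately show "\<sigma> p \<in> S" using p assms by (simp add: S_def \<sigma>_def)
    show "\<sigma> (\<sigma> p) = p" using p assms by (simp add: \<sigma>_def antipodal_shift_twice)
    have "(h + r) mod v \<noteq> (0 + r) mod v"
    proof
      assume "(h + r) mod v = (0 + r) mod v"
      then have "h = 0" by (rule mod_add_right_inj[rotated 2]) (use assms in simp_all)
      then show False using assms by simp
    qed
    then show "\<sigma> p \<noteq> p" using p by (simp add: \<sigma>_def add.commute)
  qed
  then show ?thesis unfolding S_def pair_degree_def .
qed

lemma degree_cyclic_shifts_le:
  assumes ooc: "is_OOC_4_2 u v C" and "even v" "4 dvd u * v"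
    and x: "x \<in> {0..<u} \<times> {0..<v}"
  shows "3 * degree (C \<times> {0..<v}) (\<lambda>(A, r). cyclic_shift v r A) x + 1
    \<le> (u * v - 1) * ((u * v - 2) div 2)"
proof -
  let ?X = "{0..<u} \<times> {0..<v}" and ?I = "C \<times> {0..<v}" and ?B = "\<lambda>(A, r). cyclic_shift v r A"
  obtain a b where x_eq: "x = (a, b)" by fastforce
  obtain h where h: "v = 2 * h" using \<open>even v\<close> by blast
  have "0 < v" "b < v" "a < u" using x x_eq by auto
  interpret triple_packing ?X ?I ?B 4
    using OOC_cyclic_shifts_triple_packing[OF ooc \<open>0 < v\<close>] .
  define n where "n = u * v"
  define k where "k = (n - 2) div 2"
  obtain m where m: "n = 4 * m" using \<open>4 dvd u * v\<close> unfolding n_def by blast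
  have "0 < n" using \<open>a < u\<close> \<open>b < v\<close> by (simp add: n_def)
  then have n_k: "4 \<le> n" "n - 2 = 2 * k" "odd k" using m unfolding k_def by presburger+
  have card_X: "card ?X = n" by (simp add: n_def)
  have pair_le: "pair_degree ?I ?B x y \<le> k" if "y \<in> ?X - {x}" for y
    using pair_degree_le[of x y] x that card_X n_k by auto
  define y0 where "y0 = (a, (b + h) mod v)"
  have "(h + b) mod v \<noteq> (0 + b) mod v"
    using mod_add_right_inj[of h v 0 b] h \<open>0 < v\<close> by auto
  then have y0: "y0 \<in> ?X - {x}"
    using \<open>0 < v\<close> \<open>a < u\<close> \<open>b < v\<close> by (auto simp: y0_def x_eq add.commute)
  have "finite C" using finite_index \<open>0 < v\<close> by (auto simp: finite_cartesian_product_iff)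
  then have "even (pair_degree ?I ?B x y0)"
    unfolding x_eq y0_def by (rule even_pair_degree_antipodal[OF _ h \<open>b < v\<close>])
  \<comment> \<open>the antipodal pair lies in an even number of blocks, whereas \<open>k\<close> is odd\<close>
  then have y0_le: "pair_degree ?I ?B x y0 + 1 \<le> k"
    using pair_le[OF y0] \<open>odd k\<close> by (cases "pair_degree ?I ?B x y0 = k") auto
  have "3 * degree ?I ?B x = (\<Sum>y\<in>?X - {x}. pair_degree ?I ?B x y)"
    using degree_through_point[OF x] by simp
  also have "\<dots> = pair_degree ?I ?B x y0 + (\<Sum>y\<in>?X - {x} - {y0}. pair_degree ?I ?B x y)"
    using y0 by (simp add: sum.remove)
  also have "(\<Sum>y\<in>?X - {x} - {y0}. pair_degree ?I ?B x y) \<le> (n - 2) * k"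
  proof -
    have "card (?X - {x} - {y0}) = n - 2" using x y0 card_X by (simp add: card_Diff_subset)
    then show ?thesis using sum_bounded_above[of "?X - {x} - {y0}" "pair_degree ?I ?B x" k] pair_le
      by simp
  qed
  finally have "3 * degree ?I ?B x + 1 \<le> k + (n - 2) * k" using y0_le by linarith
  also have "\<dots> = (n - 1) * k" using \<open>4 \<le> n\<close> by (simp add: algebra_simps)
  finally show ?thesis by (simp add: n_def k_def)
qed

lemma four_mul_card_OOC_le:
  assumes ooc: "is_OOC_4_2 u v C" and "0 < v" "even v" "4 dvd u * v"
    and J: "(u * v - 1) * ((u * v - 2) div 2) = 3 * J"
  shows "4 * card C \<le> u * (J - 1)"
proof -
  let ?X = "{0..<u} \<times> {0..<v}" and ?I = "C \<times> {0..<v}" and ?B = "\<lambda>(A, r). cyclic_shift v r A"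
  interpret triple_packing ?X ?I ?B 4
    using OOC_cyclic_shifts_triple_packing[OF ooc \<open>0 < v\<close>] .
  have "degree ?I ?B x \<le> J - 1" if "x \<in> ?X" for x
    using degree_cyclic_shifts_le[OF ooc \<open>even v\<close> \<open>4 dvd u * v\<close> that] J by linarith
  then have "(\<Sum>x\<in>?X. degree ?I ?B x) \<le> (u * (J - 1)) * v"
    using sum_bounded_above[of ?X "degree ?I ?B" "J - 1"] by (simp add: algebra_simps)
  moreover have "(\<Sum>x\<in>?X. degree ?I ?B x) = (4 * card C) * v"
    using sum_degree by (simp add: card_cartesian_product)
  ultimately show ?thesis using \<open>0 < v\<close> by simp
qed

lemma three_dvd_Johnson_degree_bound:
  fixes n :: nat
  assumes "n mod 12 = 4 \<or> n mod 12 = 8"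
  shows "3 dvd (n - 1) * ((n - 2) div 2)"
proof -
  obtain q where "n = 12 * q + 4 \<or> n = 12 * q + 8"
    using assms by (metis div_mod_decomp mult.commute)
  then have "n - 1 = 3 * (4 * q + 1) \<or> (n - 2) div 2 = 3 * (2 * q + 1)" by auto
  then show ?thesis by auto
qed

lemma floor_Johnson_degree_bound:
  fixes n J :: nat
  assumes "even n" "2 \<le> n" "(n - 1) * ((n - 2) div 2) = 3 * J"
  shows "\<lfloor>(real n - 1) / 3 * real_of_int \<lfloor>(real n - 2) / 2\<rfloor>\<rfloor> = int J"
proof -
  obtain b where "n = 2 * b" "1 \<le> b" using assms(1,2) by (auto elim!: evenE)
  then have "(n - 2) div 2 = b - 1" by presburger
  then have "(real n - 2) / 2 = real ((n - 2) div 2)"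
    using \<open>n = 2 * b\<close> \<open>1 \<le> b\<close> by (simp add: of_nat_diff)
  then have "\<lfloor>(real n - 2) / 2\<rfloor> = int ((n - 2) div 2)" by simp
  moreover have "(real n - 1) * real ((n - 2) div 2) = 3 * real J"
    using assms(2) arg_cong[OF assms(3), of real] by (simp add: of_nat_diff)
  ultimately show ?thesis by simp
qed

lemma Phi_4_2_le:
  assumes "\<And>C. is_OOC_4_2 u v C \<Longrightarrow> card C \<le> M"
  shows "Phi_4_2 u v \<le> M"
proof -
  have "finite {card C | C. is_OOC_4_2 u v C}"
    by (rule finite_subset[of _ "card ` Pow (matrices u v)"])
      (auto simp: is_OOC_4_2_def matrices_def)
  moreover have "is_OOC_4_2 u v {}" by (simp add: is_OOC_4_2_def)
  ultimately show ?thesis unfolding Phi_4_2_def using assms by (auto intro!: Max.boundedI)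
qed

theorem lemma5p4:
  fixes u v :: nat
  assumes "u > 0" and "v > 0"
    and "(u * v) mod 12 = 4 \<or> (u * v) mod 12 = 8"
    and "even v"
  shows "int (Phi_4_2 u v) \<le>
    \<lfloor>real u / 4 * (real_of_int \<lfloor>(real (u * v) - 1) / 3 * real_of_int \<lfloor>(real (u * v) - 2) / 2\<rfloor>\<rfloor> - 1)\<rfloor>"
proof -
  define n where "n = u * v"
  have n: "4 dvd n" "4 \<le> n" using assms(3) unfolding n_def by presburger+
  obtain J where J: "(n - 1) * ((n - 2) div 2) = 3 * J"
    using three_dvd_Johnson_degree_bound assms(3) unfolding n_def by blast
  have "3 * 1 \<le> (n - 1) * ((n - 2) div 2)" using n(2) by (intro mult_mono) auto
  then have "1 \<le> J" using J by simp
  have "Phi_4_2 u v \<le> u * (J - 1) div 4"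
  proof (rule Phi_4_2_le)
    fix C assume "is_OOC_4_2 u v C"
    then have "4 * card C \<le> u * (J - 1)"
      by (rule four_mul_card_OOC_le[OF _ assms(2,4)]) (use n J in \<open>simp_all add: n_def\<close>)
    then show "card C \<le> u * (J - 1) div 4" by simp
  qed
  then have "real (4 * Phi_4_2 u v) \<le> real (u * (J - 1))"
    by (simp only: of_nat_le_iff less_eq_div_iff_mult_less_eq mult.commute zero_less_numeral)
  then have "real (Phi_4_2 u v) \<le> real u / 4 * (real J - 1)"
    using \<open>1 \<le> J\<close> by (simp add: of_nat_diff)
  moreover have "even n" using n by auto
  ultimately show ?thesis
    using floor_Johnson_degree_bound[of n J] J n by (simp add: n_def le_floor_iff)
qed

end
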